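(* The elements $H_k$, $k\in\mathbb Z$, generate the ring $\Lambda^{\pm}_m=\mathbb Z[x_1^{\pm1},\dots,x_m^{\pm1}]^{S_m}$.
   Context: For a sequence of integers $\lambda=(\lambda_1,\dots,\lambda_m)$, $E_\lambda$ is defined by $E_\lambda(x)\prod_{i<j}(x_i-x_j)=\sum_{\sigma\in S_m}\mathrm{sgn}(\sigma)\sigma(x_1^{\lambda_1+m-1}x_2^{\lambda_2+m-2}\cdots x_m^{\lambda_m})$, and $H_k=E_{(k,0,\dots,0)}$ for $k\in\mathbb Z$. *)

theory Defs
  imports "HOL-Library.Poly_Mapping" "HOL-Combinatorics.Permutations"
begin

text \<open>Laurent polynomials over Z in variables x_0, x_1, ... (x_i is variable index i;
  the paper's x_1..x_m correspond to indices 0..m-1).  A monomial is an integer exponent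
  vector of type nat =>0 int; a Laurent polynomial is a finitely supported map from
  monomials to integer coefficients, with the convolution product of Poly_Mapping.\<close>

type_synonym lpoly = "(nat \<Rightarrow>\<^sub>0 int) \<Rightarrow>\<^sub>0 int"

definition laurent_ring :: "nat \<Rightarrow> lpoly set" where
  "laurent_ring m = {p :: lpoly. \<forall>\<alpha>\<in>Poly_Mapping.keys p. Poly_Mapping.keys \<alpha> \<subseteq> {..<m}}"

definition lvar :: "nat \<Rightarrow> lpoly" where
  "lvar i = Poly_Mapping.single (Poly_Mapping.single i 1) 1"

definition perm_mon :: "(nat \<Rightarrow> nat) \<Rightarrow> (nat \<Rightarrow>\<^sub>0 int) \<Rightarrow> (nat \<Rightarrow>\<^sub>0 int)" where
  "perm_mon \<sigma> \<alpha> = (\<Sum>i\<in>Poly_Mapping.keys \<alpha>. Poly_Mapping.single (\<sigma> i) (Poly_Mapping.lookup \<alpha> i))"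

definition sym_laurent :: "nat \<Rightarrow> lpoly set" where
  "sym_laurent m = {p \<in> laurent_ring m. \<forall>\<sigma>. \<sigma> permutes {..<m} \<longrightarrow>
      (\<forall>\<alpha>. Poly_Mapping.lookup p (perm_mon \<sigma> \<alpha>) = Poly_Mapping.lookup p \<alpha>)}"

definition vandermonde :: "nat \<Rightarrow> lpoly" where
  "vandermonde m = (\<Prod>i<m. \<Prod>j\<in>{i<..<m}. lvar i - lvar j)"

definition alternant :: "nat \<Rightarrow> (nat \<Rightarrow> int) \<Rightarrow> lpoly" where
  "alternant m e = (\<Sum>\<sigma>\<in>{\<sigma>. \<sigma> permutes {..<m}}.
      of_int (sign \<sigma>) * Poly_Mapping.single (\<Sum>i<m. Poly_Mapping.single (\<sigma> i) (e i)) 1)"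

definition E_lam :: "nat \<Rightarrow> (nat \<Rightarrow> int) \<Rightarrow> lpoly" where
  "E_lam m lam = (THE p. p \<in> laurent_ring m \<and>
      p * vandermonde m = alternant m (\<lambda>i. lam i + int (m - 1 - i)))"

definition H :: "nat \<Rightarrow> int \<Rightarrow> lpoly" where
  "H m k = E_lam m (\<lambda>i. if i = 0 then k else 0)"

inductive_set subring_gen :: "'a::comm_ring_1 set \<Rightarrow> 'a set" for S where
  gen: "x \<in> S \<Longrightarrow> x \<in> subring_gen S"
| one: "1 \<in> subring_gen S"
| add: "x \<in> subring_gen S \<Longrightarrow> y \<in> subring_gen S \<Longrightarrow> x + y \<in> subring_gen S"
| neg: "x \<in> subring_gen S \<Longrightarrow> - x \<in> subring_gen S"
| mult: "x \<in> subring_gen S \<Longrightarrow> y \<in> subring_gen S \<Longrightarrow> x * y \<in> subring_gen S"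

end

theory Submission
  imports Defs Jordan_Normal_Form.Determinant
begin

text \<open>With \<open>V\<close> the Vandermonde product, \<open>H\<^sub>k \<cdot> V\<close> is the alternant with exponents
  \<open>(k + m - 1, m - 2, \<dots>, 0)\<close>.  Expanding these alternants along their first row and using
  \<open>\<Prod>\<^sub>j (x - x\<^sub>j) = \<Sum>\<^sub>c (-1)\<^sup>c e\<^sub>c x\<^bsup>m-c\<^esup>\<close> gives the recurrence \<open>\<Sum>\<^sub>c\<^sub>\<le>\<^sub>m (-1)\<^sup>c e\<^sub>c H\<^sub>n\<^sub>-\<^sub>c \<cdot> V = 0\<close>.
  Run upwards, and downwards using that \<open>e\<^sub>m = x\<^sub>1 \<cdots> x\<^sub>m\<close> is a unit, it shows that each alternant is
  \<open>V\<close> times a symmetric Laurent polynomial, so every \<open>H\<^sub>k\<close> is symmetric.  Conversely, since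
  \<open>H\<^sub>0 = 1\<close> and \<open>H\<^sub>k = 0\<close> for \<open>1 - m \<le> k < 0\<close>, the recurrence expresses \<open>e\<^sub>1, \<dots>, e\<^sub>m\<close> and
  \<open>e\<^sub>m\<^sup>-\<^sup>1\<close> through the \<open>H\<^sub>k\<close>.  A symmetric Laurent polynomial times a high power of \<open>e\<^sub>m\<close> is a
  symmetric polynomial, hence a polynomial in \<open>e\<^sub>1, \<dots>, e\<^sub>m\<close> by the fundamental theorem, which is
  proved by the usual leading-term reduction in the lexicographic order.\<close>

definition mon :: "(nat \<Rightarrow>\<^sub>0 int) \<Rightarrow> lpoly" where
  "mon \<alpha> = Poly_Mapping.single \<alpha> 1"

lemma mon_mult: "mon \<alpha> * mon \<beta> = mon (\<alpha> + \<beta>)"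
  by (simp add: mon_def mult_single)

lemma mon_zero [simp]: "mon 0 = 1"
  by (simp add: mon_def)

lemma lookup_mon: "Poly_Mapping.lookup (mon \<alpha>) \<beta> = (if \<alpha> = \<beta> then 1 else 0)"
  by (simp add: mon_def lookup_single when_def)

lemma keys_mon [simp]: "Poly_Mapping.keys (mon \<alpha>) = {\<alpha>}"
  by (simp add: mon_def)

lemma prod_mon: "(\<Prod>i\<in>A. mon (f i)) = mon (\<Sum>i\<in>A. f i)"
  by (induction A rule: infinite_finite_induct) (simp_all add: mon_mult)

lemma mon_in_laurent_ring: "Poly_Mapping.keys \<alpha> \<subseteq> {..<m} \<Longrightarrow> mon \<alpha> \<in> laurent_ring m"
  by (simp add: laurent_ring_def)

definition xpow :: "nat \<Rightarrow> int \<Rightarrow> lpoly" where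
  "xpow j a = mon (Poly_Mapping.single j a)"

lemma xpow_add: "xpow j (a + b) = xpow j a * xpow j b"
  by (simp add: xpow_def mon_mult single_add)

lemma lvar_power: "lvar j ^ n = xpow j (int n)"
  by (induction n) (simp_all add: xpow_def lvar_def mon_def mult_single single_add add.commute)

definition ind :: "nat set \<Rightarrow> (nat \<Rightarrow>\<^sub>0 int)" where
  "ind S = (\<Sum>i\<in>S. Poly_Mapping.single i 1)"

lemma lookup_ind: "finite S \<Longrightarrow> Poly_Mapping.lookup (ind S) i = (if i \<in> S then 1 else 0)"
  by (simp add: ind_def lookup_sum lookup_single when_def)

lemma keys_ind: "finite S \<Longrightarrow> Poly_Mapping.keys (ind S) = S"
  by (auto simp: in_keys_iff lookup_ind split: if_splits)

lemma ind_eq_iff: "finite S \<Longrightarrow> finite T \<Longrightarrow> ind S = ind T \<longleftrightarrow> S = T"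
  by (metis keys_ind)

lemma lookup_eq_0_beyond_keys:
  fixes \<beta> :: "nat \<Rightarrow>\<^sub>0 int"
  assumes "Poly_Mapping.keys \<beta> \<subseteq> {..<m}" "m \<le> i"
  shows "Poly_Mapping.lookup \<beta> i = 0"
proof -
  have "i \<notin> Poly_Mapping.keys \<beta>"
    using assms by auto
  then show ?thesis
    by (simp add: in_keys_iff)
qed

lemma prod_lvar: "(\<Prod>i\<in>S. lvar i) = mon (ind S)"
  by (simp add: lvar_def ind_def prod_mon flip: mon_def)


section \<open>Symmetric Laurent polynomials\<close>

lemma lookup_perm_mon:
  assumes "bij \<sigma>"
  shows "Poly_Mapping.lookup (perm_mon \<sigma> \<alpha>) j = Poly_Mapping.lookup \<alpha> (Hilbert_Choice.inv \<sigma> j)"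
proof -
  have "Poly_Mapping.lookup (perm_mon \<sigma> \<alpha>) j
      = (\<Sum>i\<in>Poly_Mapping.keys \<alpha>. if i = Hilbert_Choice.inv \<sigma> j then Poly_Mapping.lookup \<alpha> i else 0)"
    unfolding perm_mon_def lookup_sum lookup_single
    by (rule sum.cong) (use assms in \<open>auto simp: when_def bij_inv_eq_iff\<close>)
  then show ?thesis
    by (simp add: in_keys_iff)
qed

lemma perm_mon_add: "bij \<sigma> \<Longrightarrow> perm_mon \<sigma> (\<alpha> + \<beta>) = perm_mon \<sigma> \<alpha> + perm_mon \<sigma> \<beta>"
  by (rule poly_mapping_eqI) (simp add: lookup_perm_mon lookup_add)

lemma perm_mon_uminus: "bij \<sigma> \<Longrightarrow> perm_mon \<sigma> (- \<alpha>) = - perm_mon \<sigma> \<alpha>"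
  by (rule poly_mapping_eqI) (simp add: lookup_perm_mon)

lemma perm_mon_ind:
  assumes "bij \<sigma>" "finite S"
  shows "perm_mon \<sigma> (ind S) = ind (\<sigma> ` S)"
proof (rule poly_mapping_eqI)
  fix j
  have "Hilbert_Choice.inv \<sigma> j \<in> S \<longleftrightarrow> j \<in> \<sigma> ` S"
    using assms(1) by (metis bij_inv_eq_iff image_iff)
  then show "Poly_Mapping.lookup (perm_mon \<sigma> (ind S)) j = Poly_Mapping.lookup (ind (\<sigma> ` S)) j"
    using assms by (simp add: lookup_perm_mon lookup_ind)
qed

lemma perm_mon_zero [simp]: "perm_mon \<sigma> 0 = 0"
  by (simp add: perm_mon_def)

lemma perm_mon_inv_perm_mon: "bij \<sigma> \<Longrightarrow> perm_mon (Hilbert_Choice.inv \<sigma>) (perm_mon \<sigma> \<alpha>) = \<alpha>"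
  by (rule poly_mapping_eqI)
    (simp add: lookup_perm_mon bij_imp_bij_inv inv_inv_eq inv_f_f[OF bij_is_inj])

lemma inj_perm_mon: "bij \<sigma> \<Longrightarrow> inj (perm_mon \<sigma>)"
  by (metis inj_on_inverseI perm_mon_inv_perm_mon)

lemma bij_perm_mon: "bij \<sigma> \<Longrightarrow> bij (perm_mon \<sigma>)"
  by (metis bijI' inj_perm_mon[THEN injD] bij_imp_bij_inv perm_mon_inv_perm_mon)

definition perm_invariant :: "nat \<Rightarrow> lpoly \<Rightarrow> bool" where
  "perm_invariant m p \<longleftrightarrow> (\<forall>\<sigma>. \<sigma> permutes {..<m} \<longrightarrow>
      (\<forall>\<alpha>. Poly_Mapping.lookup p (perm_mon \<sigma> \<alpha>) = Poly_Mapping.lookup p \<alpha>))"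

lemma sym_laurent_iff: "p \<in> sym_laurent m \<longleftrightarrow> p \<in> laurent_ring m \<and> perm_invariant m p"
  by (simp add: sym_laurent_def perm_invariant_def)

text \<open>Since \<open>perm_mon \<sigma>\<close> is an additive bijection of the exponents, it can be used to
  reindex both sums in the convolution product.\<close>

lemma lookup_mult_perm_mon:
  assumes "bij \<sigma>"
    and p: "\<And>\<alpha>. Poly_Mapping.lookup p (perm_mon \<sigma> \<alpha>) = Poly_Mapping.lookup p \<alpha>"
    and q: "\<And>\<alpha>. Poly_Mapping.lookup q (perm_mon \<sigma> \<alpha>) = Poly_Mapping.lookup q \<alpha>"
  shows "Poly_Mapping.lookup (p * q) (perm_mon \<sigma> \<gamma>) = Poly_Mapping.lookup (p * q) \<gamma>"
proof -
  let ?\<pi> = "perm_mon \<sigma>"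
  have b: "bij ?\<pi>" by (rule bij_perm_mon[OF assms(1)])
  have eq: "?\<pi> z = ?\<pi> x + ?\<pi> y \<longleftrightarrow> z = x + y" for x y z
    using bij_is_inj[OF b] by (auto simp: perm_mon_add[OF assms(1), symmetric] dest: injD)
  have inner: "Sum_any (\<lambda>r. Poly_Mapping.lookup q r when ?\<pi> \<gamma> = ?\<pi> l + r)
      = Sum_any (\<lambda>r. Poly_Mapping.lookup q r when \<gamma> = l + r)" for l
  proof -
    have "Sum_any (\<lambda>r. Poly_Mapping.lookup q r when ?\<pi> \<gamma> = ?\<pi> l + r)
        = Sum_any (\<lambda>r. Poly_Mapping.lookup q (?\<pi> r) when ?\<pi> \<gamma> = ?\<pi> l + ?\<pi> r)"
      by (rule Sum_any.reindex_cong[OF b]) (simp add: o_def)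
    then show ?thesis
      by (simp only: q eq)
  qed
  have "Poly_Mapping.lookup (p * q) (?\<pi> \<gamma>)
      = Sum_any (\<lambda>l. Poly_Mapping.lookup p (?\<pi> l)
          * Sum_any (\<lambda>r. Poly_Mapping.lookup q r when ?\<pi> \<gamma> = ?\<pi> l + r))"
    unfolding lookup_mult by (rule Sum_any.reindex_cong[OF b]) (simp add: o_def)
  also have "\<dots> = Poly_Mapping.lookup (p * q) \<gamma>"
    by (simp only: p inner lookup_mult)
  finally show ?thesis .
qed

lemma perm_invariant_mult: "perm_invariant m p \<Longrightarrow> perm_invariant m q \<Longrightarrow> perm_invariant m (p * q)"
  unfolding perm_invariant_def by (blast intro: lookup_mult_perm_mon permutes_bij)

lemma perm_invariant_add: "perm_invariant m p \<Longrightarrow> perm_invariant m q \<Longrightarrow> perm_invariant m (p + q)"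
  unfolding perm_invariant_def by (simp add: lookup_add)

lemma perm_invariant_uminus: "perm_invariant m p \<Longrightarrow> perm_invariant m (- p)"
  unfolding perm_invariant_def by simp

lemma perm_invariant_of_int: "perm_invariant m (of_int c)"
proof -
  have "perm_mon \<sigma> \<alpha> = 0 \<longleftrightarrow> \<alpha> = 0" if "bij \<sigma>" for \<sigma> and \<alpha> :: "nat \<Rightarrow>\<^sub>0 int"
    using inj_perm_mon[OF that] by (metis injD perm_mon_zero)
  then show ?thesis
    unfolding perm_invariant_def by (auto simp: lookup_of_int when_def permutes_bij)
qed

lemma perm_invariant_mon: "(\<And>\<sigma>. \<sigma> permutes {..<m} \<Longrightarrow> perm_mon \<sigma> \<alpha> = \<alpha>) \<Longrightarrow> perm_invariant m (mon \<alpha>)"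
  unfolding perm_invariant_def lookup_mon
  by (metis inj_perm_mon[THEN injD] permutes_bij)

lemma keys_multE:
  assumes "\<gamma> \<in> Poly_Mapping.keys (p * q)"
  obtains a b where "\<gamma> = a + b" "a \<in> Poly_Mapping.keys p" "b \<in> Poly_Mapping.keys q"
  using keys_mult[of p q] assms by blast

lemma laurent_ring_add: "p \<in> laurent_ring m \<Longrightarrow> q \<in> laurent_ring m \<Longrightarrow> p + q \<in> laurent_ring m"
  unfolding laurent_ring_def by (blast dest: subsetD[OF keys_add])

lemma laurent_ring_mult: "p \<in> laurent_ring m \<Longrightarrow> q \<in> laurent_ring m \<Longrightarrow> p * q \<in> laurent_ring m"
  unfolding laurent_ring_def by (blast elim: keys_multE dest: subsetD[OF keys_add])

lemma laurent_ring_uminus: "p \<in> laurent_ring m \<Longrightarrow> - p \<in> laurent_ring m"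
  unfolding laurent_ring_def by simp

lemma laurent_ring_of_int: "of_int c \<in> laurent_ring m"
  unfolding laurent_ring_def by (auto simp: in_keys_iff lookup_of_int when_def split: if_splits)

lemma sym_laurent_add: "p \<in> sym_laurent m \<Longrightarrow> q \<in> sym_laurent m \<Longrightarrow> p + q \<in> sym_laurent m"
  by (simp add: sym_laurent_iff laurent_ring_add perm_invariant_add)

lemma sym_laurent_mult: "p \<in> sym_laurent m \<Longrightarrow> q \<in> sym_laurent m \<Longrightarrow> p * q \<in> sym_laurent m"
  by (simp add: sym_laurent_iff laurent_ring_mult perm_invariant_mult)

lemma sym_laurent_uminus: "p \<in> sym_laurent m \<Longrightarrow> - p \<in> sym_laurent m"
  by (simp add: sym_laurent_iff laurent_ring_uminus perm_invariant_uminus)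

lemma sym_laurent_of_int: "of_int c \<in> sym_laurent m"
  by (simp add: sym_laurent_iff laurent_ring_of_int perm_invariant_of_int)

lemma sym_laurent_one: "1 \<in> sym_laurent m"
  using sym_laurent_of_int[of 1] by simp

lemma sym_laurent_zero: "0 \<in> sym_laurent m"
  using sym_laurent_of_int[of 0] by simp

lemma sym_laurent_diff: "p \<in> sym_laurent m \<Longrightarrow> q \<in> sym_laurent m \<Longrightarrow> p - q \<in> sym_laurent m"
  by (simp only: diff_conv_add_uminus sym_laurent_add sym_laurent_uminus)

lemma sym_laurent_sum: "(\<And>x. x \<in> A \<Longrightarrow> f x \<in> sym_laurent m) \<Longrightarrow> sum f A \<in> sym_laurent m"
  by (induction A rule: infinite_finite_induct) (auto simp: sym_laurent_zero sym_laurent_add)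

lemma sym_laurent_prod: "(\<And>x. x \<in> A \<Longrightarrow> f x \<in> sym_laurent m) \<Longrightarrow> prod f A \<in> sym_laurent m"
  by (induction A rule: infinite_finite_induct) (auto simp: sym_laurent_one sym_laurent_mult)

lemma sym_laurent_power: "p \<in> sym_laurent m \<Longrightarrow> p ^ n \<in> sym_laurent m"
  by (induction n) (simp_all add: sym_laurent_one sym_laurent_mult)

lemma sym_laurent_minus_one_power: "(-1) ^ n \<in> sym_laurent m"
  by (intro sym_laurent_power sym_laurent_uminus sym_laurent_one)


lemma subring_gen_least:
  assumes "S \<subseteq> T" "1 \<in> T"
    and "\<And>x y. x \<in> T \<Longrightarrow> y \<in> T \<Longrightarrow> x + y \<in> T" "\<And>x. x \<in> T \<Longrightarrow> - x \<in> T"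
    and "\<And>x y. x \<in> T \<Longrightarrow> y \<in> T \<Longrightarrow> x * y \<in> T"
  shows "subring_gen S \<subseteq> T"
proof
  show "x \<in> T" if "x \<in> subring_gen S" for x
    using that by induction (use assms in blast)+
qed

lemma subring_gen_mono: "S \<subseteq> subring_gen T \<Longrightarrow> subring_gen S \<subseteq> subring_gen T"
  by (rule subring_gen_least) (auto intro: subring_gen.intros)

lemma subring_gen_zero: "0 \<in> subring_gen S"
  using subring_gen.add[OF subring_gen.one subring_gen.neg[OF subring_gen.one]] by simp

lemma subring_gen_of_int: "of_int c \<in> subring_gen S"
proof -
  have nat: "of_nat n \<in> subring_gen S" for n
    by (induction n) (auto intro: subring_gen_zero subring_gen.add subring_gen.one)
  show ?thesis
    using nat[of "nat c"] subring_gen.neg[OF nat[of "nat (- c)"]] by (cases "c \<ge> 0") simp_all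
qed

lemma subring_gen_sum: "(\<And>x. x \<in> A \<Longrightarrow> f x \<in> subring_gen S) \<Longrightarrow> sum f A \<in> subring_gen S"
  by (induction A rule: infinite_finite_induct) (auto simp: subring_gen_zero intro: subring_gen.add)

lemma subring_gen_prod: "(\<And>x. x \<in> A \<Longrightarrow> f x \<in> subring_gen S) \<Longrightarrow> prod f A \<in> subring_gen S"
  by (induction A rule: infinite_finite_induct) (auto intro: subring_gen.one subring_gen.mult)

lemma subring_gen_power: "p \<in> subring_gen S \<Longrightarrow> p ^ n \<in> subring_gen S"
  by (induction n) (auto intro: subring_gen.one subring_gen.mult)

lemma subring_gen_minus_one_power: "(-1) ^ n \<in> subring_gen S"
  by (intro subring_gen_power subring_gen.neg subring_gen.one)

lemma subring_gen_subset_sym_laurent: "S \<subseteq> sym_laurent m \<Longrightarrow> subring_gen S \<subseteq> sym_laurent m"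
  by (rule subring_gen_least) (auto intro: sym_laurent_one sym_laurent_add sym_laurent_uminus sym_laurent_mult)


section \<open>Elementary symmetric polynomials\<close>

definition esym_on :: "nat set \<Rightarrow> nat \<Rightarrow> lpoly" where
  "esym_on A c = (\<Sum>S\<in>{S. S \<subseteq> A \<and> card S = c}. mon (ind S))"

definition esym :: "nat \<Rightarrow> nat \<Rightarrow> lpoly" where
  "esym m c = esym_on {..<m} c"

lemma vieta:
  assumes "finite A"
  shows "(\<Prod>k\<in>A. y - lvar k) = (\<Sum>c\<le>card A. (-1) ^ c * esym_on A c * y ^ (card A - c))"
proof -
  have "(\<Prod>k\<in>A. y - lvar k) = (\<Prod>k\<in>A. - lvar k + y)"
    by simp
  also have "\<dots> = (\<Sum>X\<in>Pow A. (\<Prod>k\<in>X. - lvar k) * (\<Prod>k\<in>A - X. y))"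
    by (rule prod_add[OF assms])
  also have "\<dots> = (\<Sum>X\<in>Pow A. (-1) ^ card X * mon (ind X) * y ^ (card A - card X))"
    by (rule sum.cong) (auto simp: prod_uminus prod_lvar card_Diff_subset finite_subset[OF _ assms])
  also have "\<dots> = (\<Sum>c\<le>card A. \<Sum>X\<in>{X. X \<in> Pow A \<and> card X = c}.
      (-1) ^ card X * mon (ind X) * y ^ (card A - card X))"
    by (rule sum.group[symmetric]) (auto simp: assms card_mono)
  also have "\<dots> = (\<Sum>c\<le>card A. (-1) ^ c * esym_on A c * y ^ (card A - c))"
    by (auto simp: esym_on_def sum_distrib_left sum_distrib_right intro!: sum.cong)
  finally show ?thesis .
qed

lemma esym_on_0: "finite A \<Longrightarrow> esym_on A 0 = 1"
proof -
  assume "finite A"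
  then have "{S. S \<subseteq> A \<and> card S = 0} = {{}}"
    using finite_subset by fastforce
  then show ?thesis
    by (simp add: esym_on_def ind_def)
qed

lemma esym_0: "esym m 0 = 1"
  by (simp add: esym_def esym_on_0)

lemma esym_top: "esym m m = mon (ind {..<m})"
proof -
  have "{S. S \<subseteq> {..<m} \<and> card S = m} = {{..<m}}"
    using card_subset_eq[of "{..<m}"] by auto
  then show ?thesis
    by (simp add: esym_def esym_on_def)
qed

lemma lookup_esym:
  "Poly_Mapping.lookup (esym m c) \<beta> = (\<Sum>S\<in>{S. S \<subseteq> {..<m} \<and> card S = c}. if ind S = \<beta> then 1 else 0)"
  by (simp add: esym_def esym_on_def lookup_sum lookup_mon)

lemma keys_esym: "\<beta> \<in> Poly_Mapping.keys (esym m c) \<Longrightarrow> \<exists>S. S \<subseteq> {..<m} \<and> card S = c \<and> \<beta> = ind S"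
proof (rule ccontr)
  assume "\<beta> \<in> Poly_Mapping.keys (esym m c)" "\<nexists>S. S \<subseteq> {..<m} \<and> card S = c \<and> \<beta> = ind S"
  moreover from this(2) have "Poly_Mapping.lookup (esym m c) \<beta> = 0"
    unfolding lookup_esym by (intro sum.neutral) auto
  ultimately show False
    by (simp add: in_keys_iff)
qed

lemma permutes_image_subsets:
  assumes "\<tau> permutes A"
  shows "bij_betw (image \<tau>) {S. S \<subseteq> A \<and> card S = c} {S. S \<subseteq> A \<and> card S = c}"
proof -
  have closed: "image \<rho> ` {S. S \<subseteq> A \<and> card S = c} \<subseteq> {S. S \<subseteq> A \<and> card S = c}" if "\<rho> permutes A" for \<rho>
    using permutes_image[OF that] card_image[OF inj_on_subset[OF bij_is_inj[OF permutes_bij[OF that]]]]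
    by blast
  have b: "bij \<tau>" using assms by (rule permutes_bij)
  show ?thesis
    by (rule bij_betw_byWitness[where f' = "image (Hilbert_Choice.inv \<tau>)"])
      (use b closed[OF assms] closed[OF permutes_inv[OF assms]] in
        \<open>auto simp: image_comp bij_is_inj surj_f_inv_f[OF bij_is_surj]\<close>)
qed

lemma perm_invariant_esym: "perm_invariant m (esym m c)"
  unfolding perm_invariant_def
proof (intro allI impI)
  fix \<sigma> \<beta> assume \<sigma>: "\<sigma> permutes {..<m}"
  have b: "bij \<sigma>" using \<sigma> by (rule permutes_bij)
  let ?Sets = "{S. S \<subseteq> {..<m} \<and> card S = c}"
  have "ind S = perm_mon \<sigma> \<beta> \<longleftrightarrow> ind (Hilbert_Choice.inv \<sigma> ` S) = \<beta>" if "S \<in> ?Sets" for S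
    using that perm_mon_inv_perm_mon[OF b] perm_mon_inv_perm_mon[OF bij_imp_bij_inv[OF b]]
      perm_mon_ind[OF bij_imp_bij_inv[OF b], of S]
    by (metis (mono_tags, lifting) b finite_lessThan finite_subset inv_inv_eq mem_Collect_eq)
  then have "Poly_Mapping.lookup (esym m c) (perm_mon \<sigma> \<beta>)
      = (\<Sum>S\<in>?Sets. if ind (Hilbert_Choice.inv \<sigma> ` S) = \<beta> then 1 else 0)"
    unfolding lookup_esym by (intro sum.cong) auto
  also have "\<dots> = Poly_Mapping.lookup (esym m c) \<beta>"
    unfolding lookup_esym
    by (rule sum.reindex_bij_betw[OF permutes_image_subsets[OF permutes_inv[OF \<sigma>]]])
  finally show "Poly_Mapping.lookup (esym m c) (perm_mon \<sigma> \<beta>) = Poly_Mapping.lookup (esym m c) \<beta>" .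
qed

lemma esym_in_sym_laurent: "esym m c \<in> sym_laurent m"
proof -
  have "Poly_Mapping.keys \<beta> \<subseteq> {..<m}" if "\<beta> \<in> Poly_Mapping.keys (esym m c)" for \<beta>
    using keys_esym[OF that] by (metis finite_lessThan finite_subset keys_ind)
  then have "esym m c \<in> laurent_ring m"
    by (simp add: laurent_ring_def)
  then show ?thesis
    by (simp add: sym_laurent_iff perm_invariant_esym)
qed

definition xprod_inv :: "nat \<Rightarrow> lpoly" where
  "xprod_inv m = mon (- ind {..<m})"

lemma esym_top_mult_xprod_inv: "esym m m * xprod_inv m = 1"
  by (simp add: esym_top xprod_inv_def mon_mult)

lemma xprod_inv_in_sym_laurent: "xprod_inv m \<in> sym_laurent m"
  unfolding sym_laurent_iff xprod_inv_def
  by (auto intro!: mon_in_laurent_ring perm_invariant_mon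
      simp: keys_ind perm_mon_uminus perm_mon_ind permutes_bij permutes_image)


section \<open>Alternants and the Vandermonde product\<close>

lemma alternant_eq_sum:
  "alternant m f = (\<Sum>\<sigma>\<in>{\<sigma>. \<sigma> permutes {..<m}}. of_int (sign \<sigma>) * (\<Prod>i<m. xpow (\<sigma> i) (f i)))"
  by (simp add: alternant_def xpow_def prod_mon flip: mon_def)

definition alt_mat :: "nat \<Rightarrow> (nat \<Rightarrow> int) \<Rightarrow> lpoly mat" where
  "alt_mat m f = mat m m (\<lambda>(i, j). xpow j (f i))"

lemma alternant_det: "alternant m f = det (alt_mat m f)"
proof -
  have "(\<Prod>i = 0..<m. alt_mat m f $$ (i, \<sigma> i)) = (\<Prod>i<m. xpow (\<sigma> i) (f i))"
    if "\<sigma> permutes {..<m}" for \<sigma>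
    using permutes_in_image[OF that] by (intro prod.cong) (auto simp: alt_mat_def atLeast0LessThan)
  then show ?thesis
    by (simp add: det_def'[of _ m] alt_mat_def alternant_eq_sum atLeast0LessThan)
qed

lemma vieta_mat_factorization:
  "mat m m (\<lambda>(i, j). \<Prod>k\<in>{i<..<m}. lvar j - lvar k)
    = mat m m (\<lambda>(i, k). if i \<le> k then (-1) ^ (k - i) * esym_on {i<..<m} (k - i) else 0)
      * alt_mat m (\<lambda>i. int (m - 1 - i))" (is "?N = ?C * ?M")
proof (rule eq_matI)
  fix i j assume "i < dim_row (?C * ?M)" "j < dim_col (?C * ?M)"
  then have i: "i < m" and j: "j < m" by (simp_all add: alt_mat_def)
  let ?A = "{i<..<m}"
  have "(?C * ?M) $$ (i, j) = (\<Sum>k\<in>{i..<m}. (-1) ^ (k - i) * esym_on ?A (k - i) * xpow j (int (m - 1 - k)))"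
    using i j
    by (simp add: scalar_prod_def alt_mat_def if_distrib[of "\<lambda>x. x * _"] sum.If_cases)
      (auto intro!: sum.cong)
  also have "\<dots> = (\<Sum>c<m - i. (-1) ^ c * esym_on ?A c * xpow j (int (m - 1 - (c + i))))"
    by (rule sum.reindex_bij_witness[of _ "\<lambda>c. c + i" "\<lambda>k. k - i"]) (use i in auto)
  also have "\<dots> = (\<Sum>c\<le>card ?A. (-1) ^ c * esym_on ?A c * lvar j ^ (card ?A - c))"
    using i by (intro sum.cong) (auto simp: lvar_power ac_simps)
  also have "\<dots> = ?N $$ (i, j)"
    using i j by (simp add: vieta)
  finally show "?N $$ (i, j) = (?C * ?M) $$ (i, j)" by simp
qed (simp_all add: alt_mat_def)

text \<open>In the factorization above, the left matrix is lower triangular with the factors of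
  \<open>vandermonde m\<close> on its diagonal, and the first factor on the right is unitriangular.\<close>

lemma vandermonde_alternant: "vandermonde m = alternant m (\<lambda>i. int (m - 1 - i))"
proof -
  define N where "N = mat m m (\<lambda>(i, j). \<Prod>k\<in>{i<..<m}. lvar j - lvar k)"
  define C where "C = mat m m (\<lambda>(i, k). if i \<le> k then (-1) ^ (k - i) * esym_on {i<..<m} (k - i) else 0)"
  define M where "M = alt_mat m (\<lambda>i. int (m - 1 - i))"
  have carr: "N \<in> carrier_mat m m" "C \<in> carrier_mat m m" "M \<in> carrier_mat m m"
    by (simp_all add: N_def C_def M_def alt_mat_def)
  have "det C = prod_list (diag_mat C)"
    by (rule det_upper_triangular[OF _ carr(2)]) (auto simp: upper_triangular_def C_def)
  then have det_C: "det C = 1"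
    using carr by (simp add: diag_mat_def prod.distinct_set_conv_list[symmetric] C_def esym_on_0)
  have "det N = prod_list (diag_mat N)"
    by (rule det_lower_triangular[OF _ carr(1)]) (auto simp: N_def)
  then have det_N: "det N = vandermonde m"
    using carr by (simp add: diag_mat_def prod.distinct_set_conv_list[symmetric] vandermonde_def N_def
        atLeast0LessThan)
  show ?thesis
    using vieta_mat_factorization[of m, folded N_def C_def M_def] det_mult[OF carr(2,3)] det_C det_N
    by (simp add: M_def alternant_det)
qed

definition stair :: "nat \<Rightarrow> int \<Rightarrow> nat \<Rightarrow> int" where
  "stair m a = (\<lambda>i. if i = 0 then a else int (m - 1 - i))"

definition stair_alt :: "nat \<Rightarrow> int \<Rightarrow> lpoly" where
  "stair_alt m a = alternant m (stair m a)"

lemma stair_alt_staircase: "stair_alt m (int (m - 1)) = vandermonde m"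
proof -
  have "stair m (int (m - 1)) = (\<lambda>i. int (m - 1 - i))"
    by (auto simp: stair_def)
  then show ?thesis
    by (simp add: stair_alt_def vandermonde_alternant)
qed

lemma stair_alt_eq_0:
  assumes "0 \<le> a" "a \<le> int m - 2"
  shows "stair_alt m a = 0"
proof -
  define i where "i = m - 1 - nat a"
  have i: "0 < i" "i < m" and "stair m a i = stair m a 0"
    using assms by (auto simp: i_def stair_def)
  then have "det (alt_mat m (stair m a)) = 0"
    by (intro det_identical_rows[of _ m 0 i]) (auto simp: alt_mat_def row_def)
  then show ?thesis
    by (simp add: stair_alt_def alternant_det)
qed

lemma esym_vieta_root:
  assumes "j < m"
  shows "(\<Sum>c\<le>m. (-1) ^ c * esym m c * xpow j (a - int c)) = 0"
proof -
  have "(\<Sum>c\<le>m. (-1) ^ c * esym m c * xpow j (a - int c))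
      = xpow j (a - int m) * (\<Sum>c\<le>m. (-1) ^ c * esym m c * lvar j ^ (m - c))"
    unfolding sum_distrib_left
    by (intro sum.cong) (auto simp: lvar_power xpow_add[symmetric] mult_ac)
  also have "\<dots> = xpow j (a - int m) * (\<Prod>k<m. lvar j - lvar k)"
    using vieta[of "{..<m}" "lvar j"] by (simp add: esym_def)
  also have "\<dots> = 0"
    using assms by (auto simp: prod_zero_iff)
  finally show ?thesis .
qed

lemma stair_alt_eq_sum:
  assumes "m > 0"
  shows "stair_alt m a = (\<Sum>\<sigma>\<in>{\<sigma>. \<sigma> permutes {..<m}}.
    of_int (sign \<sigma>) * xpow (\<sigma> 0) a * (\<Prod>i\<in>{1..<m}. xpow (\<sigma> i) (int (m - 1 - i))))"
proof -
  have "{..<m} = insert 0 {1..<m}" using assms by auto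
  then show ?thesis
    by (simp add: stair_alt_def alternant_eq_sum stair_def mult.assoc)
qed

text \<open>Expanding along the first row: the coefficient of each term is \<open>esym_vieta_root\<close>.\<close>

lemma stair_alt_recurrence:
  assumes "m > 0"
  shows "(\<Sum>c\<le>m. (-1) ^ c * esym m c * stair_alt m (a - int c)) = 0"
proof -
  let ?P = "\<lambda>\<sigma>. \<Prod>i\<in>{1..<m}. xpow (\<sigma> i) (int (m - 1 - i))"
  have "(\<Sum>c\<le>m. (-1) ^ c * esym m c * stair_alt m (a - int c))
      = (\<Sum>\<sigma>\<in>{\<sigma>. \<sigma> permutes {..<m}}. of_int (sign \<sigma>) * ?P \<sigma> *
          (\<Sum>c\<le>m. (-1) ^ c * esym m c * xpow (\<sigma> 0) (a - int c)))"
    unfolding stair_alt_eq_sum[OF assms] sum_distrib_left sum_distrib_right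
    by (subst sum.swap) (simp add: mult_ac)
  also have "\<dots> = 0"
  proof (intro sum.neutral ballI)
    fix \<sigma> assume "\<sigma> \<in> {\<sigma>. \<sigma> permutes {..<m}}"
    then have "\<sigma> 0 < m"
      using assms permutes_in_image by fastforce
    then show "of_int (sign \<sigma>) * ?P \<sigma> * (\<Sum>c\<le>m. (-1) ^ c * esym m c * xpow (\<sigma> 0) (a - int c)) = 0"
      by (simp add: esym_vieta_root)
  qed
  finally show ?thesis .
qed


section \<open>The polynomials \<open>H\<^sub>k\<close>\<close>

definition sym_times_vandermonde :: "nat \<Rightarrow> lpoly \<Rightarrow> bool" where
  "sym_times_vandermonde m p \<longleftrightarrow> (\<exists>q\<in>sym_laurent m. p = q * vandermonde m)"

lemma sym_times_vandermonde_sum: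
  assumes "\<And>c. c \<in> A \<Longrightarrow> g c \<in> sym_laurent m" "\<And>c. c \<in> A \<Longrightarrow> sym_times_vandermonde m (F c)"
  shows "sym_times_vandermonde m (\<Sum>c\<in>A. g c * F c)"
proof -
  obtain Q where Q: "\<And>c. c \<in> A \<Longrightarrow> Q c \<in> sym_laurent m \<and> F c = Q c * vandermonde m"
    using assms(2) unfolding sym_times_vandermonde_def by metis
  then have "(\<Sum>c\<in>A. g c * F c) = (\<Sum>c\<in>A. g c * Q c) * vandermonde m"
    by (simp add: sum_distrib_right mult.assoc)
  moreover have "(\<Sum>c\<in>A. g c * Q c) \<in> sym_laurent m"
    using assms(1) Q by (intro sym_laurent_sum sym_laurent_mult) auto
  ultimately show ?thesis
    unfolding sym_times_vandermonde_def by blast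
qed

lemma stair_alt_shift_down:
  assumes "m > 0"
  shows "stair_alt m a = (\<Sum>c<m. (-1) ^ c * esym m (Suc c) * stair_alt m (a - int (Suc c)))"
proof -
  have "(\<Sum>c\<le>m. (-1) ^ c * esym m c * stair_alt m (a - int c))
      = stair_alt m a - (\<Sum>c<m. (-1) ^ c * esym m (Suc c) * stair_alt m (a - int (Suc c)))"
    using assms by (cases m) (simp_all only: sum.atMost_Suc_shift lessThan_Suc_atMost, simp add: esym_0 sum_negf)
  then show ?thesis
    using stair_alt_recurrence[OF assms] by simp
qed

lemma stair_alt_shift_up:
  assumes "m > 0"
  shows "stair_alt m a = (\<Sum>c<m. - ((-1) ^ (m + c) * xprod_inv m * esym m c) * stair_alt m (a + int m - int c))"
proof -
  have "(\<Sum>c\<le>m. (-1) ^ c * esym m c * stair_alt m ((a + int m) - int c))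
      = (-1) ^ m * esym m m * stair_alt m a + (\<Sum>c<m. (-1) ^ c * esym m c * stair_alt m (a + int m - int c))"
    by (simp add: lessThan_Suc_atMost[symmetric])
  then have "(-1) ^ m * esym m m * stair_alt m a = - (\<Sum>c<m. (-1) ^ c * esym m c * stair_alt m (a + int m - int c))"
    using stair_alt_recurrence[OF assms, of "a + int m"] by (simp add: eq_neg_iff_add_eq_0 add.commute)
  then have rec: "((-1) ^ m * xprod_inv m) * ((-1) ^ m * esym m m * stair_alt m a)
      = (\<Sum>c<m. - ((-1) ^ m * xprod_inv m * ((-1) ^ c * esym m c)) * stair_alt m (a + int m - int c))"
    by (simp add: sum_distrib_left mult.assoc sum_negf)
  have "stair_alt m a = ((-1) ^ m * (-1) ^ m) * (esym m m * xprod_inv m) * stair_alt m a"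
    by (simp add: esym_top_mult_xprod_inv flip: power_mult_distrib)
  also have "\<dots> = ((-1) ^ m * xprod_inv m) * ((-1) ^ m * esym m m * stair_alt m a)"
    by (simp only: mult_ac)
  also have "\<dots> = (\<Sum>c<m. - ((-1) ^ (m + c) * xprod_inv m * esym m c) * stair_alt m (a + int m - int c))"
    unfolding rec by (simp add: power_add mult_ac)
  finally show ?thesis .
qed

lemma stair_alt_nonneg:
  assumes "m > 0" "0 \<le> a"
  shows "sym_times_vandermonde m (stair_alt m a)"
  using assms(2)
proof (induction "nat a" arbitrary: a rule: less_induct)
  case less
  consider "a \<le> int m - 2" | "a = int (m - 1)" | "a \<ge> int m"
    using assms(1) by linarith
  then show ?case
  proof cases
    case 1
    then show ?thesis
      using less.prems sym_laurent_zero by (auto simp: sym_times_vandermonde_def stair_alt_eq_0)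
  next
    case 2
    then have "stair_alt m a = 1 * vandermonde m"
      by (simp only: stair_alt_staircase mult_1)
    then show ?thesis
      using sym_laurent_one unfolding sym_times_vandermonde_def by blast
  next
    case 3
    have shifted: "sym_times_vandermonde m (stair_alt m (a - int (Suc c)))" if "c \<in> {..<m}" for c
      using 3 that less.hyps[of "a - int (Suc c)"] by auto
    show ?thesis
      by (subst stair_alt_shift_down[OF assms(1)])
        (intro sym_times_vandermonde_sum shifted sym_laurent_mult esym_in_sym_laurent
          sym_laurent_minus_one_power)
  qed
qed

lemma stair_alt_sym_times_vandermonde:
  assumes "m > 0"
  shows "sym_times_vandermonde m (stair_alt m a)"
proof (induction "nat (- a)" arbitrary: a rule: less_induct)
  case less
  show ?case
  proof (cases "0 \<le> a")
    case True
    then show ?thesis by (rule stair_alt_nonneg[OF assms])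
  next
    case False
    have shifted: "sym_times_vandermonde m (stair_alt m (a + int m - int c))" if "c \<in> {..<m}" for c
      using False that stair_alt_nonneg[OF assms] less.hyps[of "a + int m - int c"]
      by (cases "0 \<le> a + int m - int c") auto
    show ?thesis
      by (subst stair_alt_shift_up[OF assms])
        (intro sym_times_vandermonde_sum shifted sym_laurent_uminus sym_laurent_mult
          xprod_inv_in_sym_laurent esym_in_sym_laurent sym_laurent_minus_one_power)
  qed
qed

lemma lvar_eq_iff: "lvar i = lvar j \<longleftrightarrow> i = j"
  by (metis lvar_def lookup_single_eq lookup_single_not_eq zero_neq_one)

lemma vandermonde_nonzero: "vandermonde m \<noteq> 0"
  by (auto simp: vandermonde_def prod_zero_iff lvar_eq_iff)

lemma H_eqI:
  assumes "p \<in> laurent_ring m" "p * vandermonde m = stair_alt m (k + int (m - 1))"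
  shows "H m k = p"
proof -
  have stair: "(\<lambda>i. (if i = 0 then k else 0) + int (m - 1 - i)) = stair m (k + int (m - 1))"
    by (auto simp: stair_def)
  show ?thesis
    unfolding H_def E_lam_def stair stair_alt_def[symmetric]
  proof (rule the_equality)
    show "p \<in> laurent_ring m \<and> p * vandermonde m = stair_alt m (k + int (m - 1))"
      using assms by simp
    fix q assume "q \<in> laurent_ring m \<and> q * vandermonde m = stair_alt m (k + int (m - 1))"
    then have "q * vandermonde m = p * vandermonde m"
      using assms by simp
    then show "q = p"
      using vandermonde_nonzero by simp
  qed
qed

lemma H_mult_vandermonde:
  assumes "m > 0"
  shows "H m k \<in> sym_laurent m" "H m k * vandermonde m = stair_alt m (k + int m - 1)"
proof -
  have k: "k + int (m - 1) = k + int m - 1"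
    using assms by simp
  obtain q where "q \<in> sym_laurent m" "stair_alt m (k + int m - 1) = q * vandermonde m"
    using stair_alt_sym_times_vandermonde[OF assms] by (auto simp: sym_times_vandermonde_def)
  moreover from this have "H m k = q"
    by (intro H_eqI) (simp_all only: k sym_laurent_iff)
  ultimately show "H m k \<in> sym_laurent m" "H m k * vandermonde m = stair_alt m (k + int m - 1)"
    by simp_all
qed

lemma H_0: "H m 0 = 1"
  by (rule H_eqI) (simp add: laurent_ring_of_int[of 1, simplified], simp only: mult_1 add_0 stair_alt_staircase)

lemma H_eq_0: "1 - int m \<le> k \<Longrightarrow> k < 0 \<Longrightarrow> H m k = 0"
  by (rule H_eqI) (simp_all add: laurent_ring_of_int[of 0, simplified] stair_alt_eq_0)

lemma H_recurrence:
  assumes "m > 0"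
  shows "(\<Sum>c\<le>m. (-1) ^ c * esym m c * H m (n - int c)) = 0"
proof -
  have "H m (n - int c) * vandermonde m = stair_alt m (n + int m - 1 - int c)" for c
    using H_mult_vandermonde(2)[OF assms, of "n - int c"] by (simp add: algebra_simps)
  then have "(\<Sum>c\<le>m. (-1) ^ c * esym m c * H m (n - int c)) * vandermonde m
      = (\<Sum>c\<le>m. (-1) ^ c * esym m c * stair_alt m (n + int m - 1 - int c))"
    by (simp add: sum_distrib_right mult.assoc)
  then show ?thesis
    using stair_alt_recurrence[OF assms] vandermonde_nonzero by simp
qed

text \<open>Since \<open>H\<^sub>0 = 1\<close> and \<open>H\<^sub>k = 0\<close> for \<open>1 - m \<le> k < 0\<close>, the recurrence at \<open>n \<le> m\<close>
  expresses \<open>esym m n\<close> through \<open>H\<^sub>1, \<dots>, H\<^sub>n\<close> and lower \<open>esym\<close>'s, and at \<open>n = 0\<close> it gives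
  \<open>(-1)\<^sup>m esym m m \<cdot> H\<^sub>-\<^sub>m = -1\<close>.\<close>

lemma H_recurrence_truncated:
  assumes "m > 0" "0 < n" "n \<le> m"
  shows "(\<Sum>c\<le>n. (-1) ^ c * esym m c * H m (int n - int c)) = 0"
proof -
  have "H m (int n - int c) = 0" if "c \<in> {..m} - {..n}" for c
    using that assms(2) by (intro H_eq_0) auto
  then have "(\<Sum>c\<le>m. (-1) ^ c * esym m c * H m (int n - int c))
      = (\<Sum>c\<le>n. (-1) ^ c * esym m c * H m (int n - int c))"
    using assms(3) by (intro sum.mono_neutral_right) auto
  then show ?thesis
    using H_recurrence[OF assms(1)] by simp
qed

lemma esym_in_subring_gen_H:
  assumes "m > 0" "n \<le> m"
  shows "esym m n \<in> subring_gen (range (H m))"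
  using assms(2)
proof (induction n rule: less_induct)
  case (less n)
  show ?case
  proof (cases "n = 0")
    case True
    then show ?thesis by (simp add: esym_0 subring_gen.one)
  next
    case False
    let ?S = "\<Sum>c<n. (-1) ^ c * esym m c * H m (int n - int c)"
    have "?S + (-1) ^ n * esym m n = 0"
      using H_recurrence_truncated[OF assms(1) _ less.prems] False
      by (simp add: H_0 lessThan_Suc_atMost[symmetric])
    then have S: "(-1) ^ n * esym m n = - ?S"
      by (simp only: add_eq_0_iff)
    have "esym m n = ((-1) ^ n * (-1) ^ n) * esym m n"
      by (simp flip: power_mult_distrib)
    also have "\<dots> = (-1) ^ n * - ?S"
      by (simp only: mult.assoc S)
    also have "\<dots> \<in> subring_gen (range (H m))"
      using less by (intro subring_gen.mult subring_gen.neg subring_gen_minus_one_power subring_gen_sum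
          less.IH subring_gen.gen) auto
    finally show ?thesis .
  qed
qed

lemma xprod_inv_in_subring_gen_H:
  assumes "m > 0"
  shows "xprod_inv m \<in> subring_gen (range (H m))"
proof -
  have "H m (0 - int c) = 0" if "c \<in> {..m} - {0, m}" for c
    using that by (intro H_eq_0) auto
  then have "(\<Sum>c\<le>m. (-1) ^ c * esym m c * H m (0 - int c))
      = (\<Sum>c\<in>{0, m}. (-1) ^ c * esym m c * H m (0 - int c))"
    by (intro sum.mono_neutral_right) auto
  then have "1 + (-1) ^ m * esym m m * H m (- int m) = 0"
    using H_recurrence[OF assms, of 0] assms by (simp add: esym_0 H_0)
  then have "(-1) ^ m * esym m m * H m (- int m) = -1"
    by (simp only: add_eq_0_iff)
  then have "xprod_inv m = - ((-1) ^ m * esym m m * H m (- int m) * xprod_inv m)"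
    by simp
  also have "\<dots> = - ((-1) ^ m * H m (- int m) * (esym m m * xprod_inv m))"
    by (simp only: mult_ac)
  also have "\<dots> = - ((-1) ^ m * H m (- int m))"
    by (simp add: esym_top_mult_xprod_inv)
  also have "\<dots> \<in> subring_gen (range (H m))"
    by (intro subring_gen.neg subring_gen.mult subring_gen_minus_one_power subring_gen.gen) simp
  finally show ?thesis .
qed


section \<open>The fundamental theorem on symmetric polynomials\<close>

text \<open>Exponent vectors are ordered lexicographically (the library order on \<open>nat \<Rightarrow>\<^sub>0 int\<close>).\<close>

lemma lookup_mult_diff:
  "Poly_Mapping.lookup ((p :: lpoly) * q) \<gamma>
    = Sum_any (\<lambda>l. Poly_Mapping.lookup p l * Poly_Mapping.lookup q (\<gamma> - l))"
proof -
  have "\<gamma> = l + r \<longleftrightarrow> r = \<gamma> - l" for l r :: "nat \<Rightarrow>\<^sub>0 int"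
    by (auto simp: eq_diff_eq add.commute)
  then have "Sum_any (\<lambda>r. Poly_Mapping.lookup q r when \<gamma> = l + r) = Poly_Mapping.lookup q (\<gamma> - l)" for l
    by (simp add: Sum_any_when_equal)
  then show ?thesis
    by (simp add: lookup_mult)
qed

lemma lookup_of_int_mult: "Poly_Mapping.lookup (of_int c * (p :: lpoly)) \<beta> = c * Poly_Mapping.lookup p \<beta>"
proof -
  have "Poly_Mapping.lookup (of_int c * p) \<beta>
      = Sum_any (\<lambda>l. (Poly_Mapping.lookup p (\<beta> - l) * c) when l = 0)"
    unfolding lookup_mult_diff by (rule Sum_any.cong) (simp add: lookup_of_int when_def)
  then show ?thesis
    by (simp add: Sum_any_when_equal)
qed

definition lead_monic :: "lpoly \<Rightarrow> (nat \<Rightarrow>\<^sub>0 int) \<Rightarrow> bool" where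
  "lead_monic p \<alpha> \<longleftrightarrow> Poly_Mapping.lookup p \<alpha> = 1 \<and> (\<forall>\<beta>\<in>Poly_Mapping.keys p. \<beta> \<le> \<alpha>)"

lemma lead_monic_mult:
  assumes p: "lead_monic p \<alpha>" and q: "lead_monic q \<beta>"
  shows "lead_monic (p * q) (\<alpha> + \<beta>)"
  unfolding lead_monic_def
proof
  have "Poly_Mapping.lookup p l * Poly_Mapping.lookup q (\<alpha> + \<beta> - l) = 0" if "l \<noteq> \<alpha>" for l
  proof (rule ccontr)
    assume "Poly_Mapping.lookup p l * Poly_Mapping.lookup q (\<alpha> + \<beta> - l) \<noteq> 0"
    then have "l \<le> \<alpha>" "\<alpha> + \<beta> - l \<le> \<beta>"
      using p q by (auto simp: lead_monic_def in_keys_iff)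
    then have "l + (\<alpha> + \<beta> - l) < \<alpha> + \<beta>"
      using that by (metis add_less_le_mono order_le_neq_trans)
    then show False by simp
  qed
  then have "Poly_Mapping.lookup (p * q) (\<alpha> + \<beta>)
      = Sum_any (\<lambda>l. Poly_Mapping.lookup p l * Poly_Mapping.lookup q (\<alpha> + \<beta> - l) when l = \<alpha>)"
    unfolding lookup_mult_diff by (intro Sum_any.cong) (auto simp: when_def)
  then show "Poly_Mapping.lookup (p * q) (\<alpha> + \<beta>) = 1"
    using p q by (simp add: lead_monic_def)
  show "\<forall>\<gamma>\<in>Poly_Mapping.keys (p * q). \<gamma> \<le> \<alpha> + \<beta>"
    using p q by (auto simp: lead_monic_def intro: add_mono elim!: keys_multE)
qed

lemma lead_monic_one: "lead_monic 1 0"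
  by (simp add: lead_monic_def)

lemma lead_monic_prod:
  "(\<And>i. i \<in> I \<Longrightarrow> lead_monic (f i) (a i)) \<Longrightarrow> lead_monic (\<Prod>i\<in>I. f i) (\<Sum>i\<in>I. a i)"
  by (induction I rule: infinite_finite_induct) (simp_all add: lead_monic_one lead_monic_mult)

lemma sum_const_frag_cmul: "(\<Sum>_<k. \<alpha>) = frag_cmul (int k) \<alpha>"
  by (induction k) (simp_all del: sum_constant add: frag_cmul_distrib add.commute)

lemma lead_monic_power: "lead_monic p \<alpha> \<Longrightarrow> lead_monic (p ^ k) (frag_cmul (int k) \<alpha>)"
  using lead_monic_prod[of "{..<k}" "\<lambda>_. p" "\<lambda>_. \<alpha>"]
  by (simp only: prod_constant card_lessThan sum_const_frag_cmul)

lemma ind_le_ind_lessThan: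
  assumes "finite S"
  shows "ind S \<le> ind {..<card S}"
proof (cases "{..<card S} \<subseteq> S")
  case True
  then show ?thesis
    using card_subset_eq[OF assms True] by simp
next
  case False
  define k where "k = (LEAST k. k < card S \<and> k \<notin> S)"
  have k: "k < card S \<and> k \<notin> S"
    unfolding k_def by (rule LeastI_ex) (use False in auto)
  have below: "j \<in> S" if "j < k" for j
    using not_less_Least[of j "\<lambda>k. k < card S \<and> k \<notin> S", folded k_def] that k by auto
  have "less_fun (Poly_Mapping.lookup (ind S)) (Poly_Mapping.lookup (ind {..<card S}))"
    unfolding less_fun_def using k below by (intro exI[of _ k]) (auto simp: lookup_ind assms)
  then show ?thesis
    by (simp add: less_eq_poly_mapping.rep_eq)
qed

lemma lead_monic_esym:
  assumes "c \<le> m"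
  shows "lead_monic (esym m c) (ind {..<c})"
proof -
  have "Poly_Mapping.lookup (esym m c) (ind {..<c})
      = (\<Sum>S\<in>{S. S \<subseteq> {..<m} \<and> card S = c}. if S = {..<c} then 1 else 0)"
    unfolding lookup_esym by (intro sum.cong) (auto simp: ind_eq_iff finite_subset)
  also have "\<dots> = 1"
    using assms by simp
  finally have "Poly_Mapping.lookup (esym m c) (ind {..<c}) = 1" .
  moreover have "\<beta> \<le> ind {..<c}" if "\<beta> \<in> Poly_Mapping.keys (esym m c)" for \<beta>
    using keys_esym[OF that] by (metis ind_le_ind_lessThan finite_subset finite_lessThan)
  ultimately show ?thesis
    by (simp add: lead_monic_def)
qed

definition nonneg_exps :: "nat \<Rightarrow> (nat \<Rightarrow>\<^sub>0 int) \<Rightarrow> bool" where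
  "nonneg_exps m \<beta> \<longleftrightarrow> Poly_Mapping.keys \<beta> \<subseteq> {..<m} \<and> (\<forall>i. 0 \<le> Poly_Mapping.lookup \<beta> i)"

definition total_deg :: "nat \<Rightarrow> (nat \<Rightarrow>\<^sub>0 int) \<Rightarrow> int" where
  "total_deg m \<beta> = (\<Sum>i<m. Poly_Mapping.lookup \<beta> i)"

definition homogeneous :: "nat \<Rightarrow> int \<Rightarrow> lpoly \<Rightarrow> bool" where
  "homogeneous m d p \<longleftrightarrow> (\<forall>\<beta>\<in>Poly_Mapping.keys p. nonneg_exps m \<beta> \<and> total_deg m \<beta> = d)"

lemma homogeneous_mult: "homogeneous m d p \<Longrightarrow> homogeneous m e q \<Longrightarrow> homogeneous m (d + e) (p * q)"
  unfolding homogeneous_def nonneg_exps_def total_deg_def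
  by (fastforce simp: lookup_add sum.distrib elim!: keys_multE dest!: subsetD[OF keys_add])

lemma homogeneous_prod:
  "(\<And>i. i \<in> I \<Longrightarrow> homogeneous m (d i) (f i)) \<Longrightarrow> homogeneous m (\<Sum>i\<in>I. d i) (\<Prod>i\<in>I. f i)"
  by (induction I rule: infinite_finite_induct)
    (simp_all add: homogeneous_mult, simp_all add: homogeneous_def nonneg_exps_def total_deg_def)

lemma homogeneous_power: "homogeneous m d p \<Longrightarrow> homogeneous m (of_nat k * d) (p ^ k)"
  using homogeneous_prod[of "{..<k}" m "\<lambda>_. d" "\<lambda>_. p"] by simp

lemma homogeneous_esym: "homogeneous m (int c) (esym m c)"
proof -
  have "total_deg m (ind S) = int (card S)" if "S \<subseteq> {..<m}" for S
    using that finite_subset[OF that]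
    by (simp add: total_deg_def lookup_ind sum.If_cases Int_absorb1 flip: Int_def)
  then show ?thesis
    unfolding homogeneous_def nonneg_exps_def
    by (fastforce dest: keys_esym simp: keys_ind lookup_ind finite_subset)
qed

definition esym_mon :: "nat \<Rightarrow> (nat \<Rightarrow>\<^sub>0 int) \<Rightarrow> lpoly" where
  "esym_mon m \<alpha> = (\<Prod>i<m. esym m (Suc i) ^ nat (Poly_Mapping.lookup \<alpha> i - Poly_Mapping.lookup \<alpha> (Suc i)))"

definition decreasing :: "nat \<Rightarrow> (nat \<Rightarrow>\<^sub>0 int) \<Rightarrow> bool" where
  "decreasing m \<alpha> \<longleftrightarrow> (\<forall>i. Suc i < m \<longrightarrow> Poly_Mapping.lookup \<alpha> (Suc i) \<le> Poly_Mapping.lookup \<alpha> i)"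

lemma lead_monic_esym_mon:
  assumes nn: "nonneg_exps m \<alpha>" and dec: "decreasing m \<alpha>"
  shows "lead_monic (esym_mon m \<alpha>) \<alpha>"
proof -
  let ?a = "Poly_Mapping.lookup \<alpha>"
  define k where "k i = nat (?a i - ?a (Suc i))" for i
  have out: "?a i = 0" if "m \<le> i" for i
    using nn that by (intro lookup_eq_0_beyond_keys) (simp_all add: nonneg_exps_def)
  have k: "int (k i) = ?a i - ?a (Suc i)" if "i < m" for i
    using nn dec that out[of "Suc i"] by (cases "Suc i < m") (auto simp: k_def decreasing_def nonneg_exps_def)
  have "lead_monic (esym_mon m \<alpha>) (\<Sum>i<m. frag_cmul (int (k i)) (ind {..<Suc i}))"
    unfolding esym_mon_def k_def[symmetric]
    by (intro lead_monic_prod lead_monic_power lead_monic_esym) auto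
  moreover have "(\<Sum>i<m. frag_cmul (int (k i)) (ind {..<Suc i})) = \<alpha>"
  proof (rule poly_mapping_eqI)
    fix j
    have "Poly_Mapping.lookup (\<Sum>i<m. frag_cmul (int (k i)) (ind {..<Suc i})) j = (\<Sum>i\<in>{j..<m}. ?a i - ?a (Suc i))"
      by (simp add: lookup_sum lookup_ind) (intro sum.mono_neutral_cong_right, auto simp: k)
    also have "\<dots> = ?a j"
      using sum_Suc_diff'[of j m "\<lambda>i. - ?a i"] out[of m] out[of j] by (cases "j \<le> m") auto
    finally show "Poly_Mapping.lookup (\<Sum>i<m. frag_cmul (int (k i)) (ind {..<Suc i})) j = ?a j" .
  qed
  ultimately show ?thesis
    by simp
qed

lemma homogeneous_esym_mon: "\<exists>d. homogeneous m d (esym_mon m \<alpha>)"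
proof -
  have "homogeneous m (\<Sum>i<m. of_nat (nat (Poly_Mapping.lookup \<alpha> i - Poly_Mapping.lookup \<alpha> (Suc i))) * int (Suc i))
      (esym_mon m \<alpha>)"
    unfolding esym_mon_def by (intro homogeneous_prod homogeneous_power homogeneous_esym)
  then show ?thesis ..
qed

lemma esym_mon_in_sym_laurent: "esym_mon m \<alpha> \<in> sym_laurent m"
  unfolding esym_mon_def by (intro sym_laurent_prod sym_laurent_power esym_in_sym_laurent)

lemma esym_mon_in_subring_gen_esym: "esym_mon m \<alpha> \<in> subring_gen (esym m ` {..m})"
  unfolding esym_mon_def by (intro subring_gen_prod subring_gen_power subring_gen.gen) auto

text \<open>If the leading exponent increased from position \<open>i\<close> to \<open>i + 1\<close>, swapping these two
  variables would produce a lexicographically larger exponent of the symmetric \<open>q\<close>.\<close>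

lemma decreasing_Max_keys:
  assumes q: "q \<in> sym_laurent m" "q \<noteq> 0"
  shows "decreasing m (Max (Poly_Mapping.keys q))"
  unfolding decreasing_def
proof (intro allI impI, rule ccontr)
  fix i assume i: "Suc i < m"
  let ?\<alpha> = "Max (Poly_Mapping.keys q)"
  assume "\<not> Poly_Mapping.lookup ?\<alpha> (Suc i) \<le> Poly_Mapping.lookup ?\<alpha> i"
  define \<sigma> where "\<sigma> = Transposition.transpose i (Suc i)"
  have \<sigma>: "\<sigma> permutes {..<m}"
    unfolding \<sigma>_def using i by (intro permutes_swap_id) auto
  have "?\<alpha> \<in> Poly_Mapping.keys q"
    using q by (intro Max_in) auto
  then have "perm_mon \<sigma> ?\<alpha> \<in> Poly_Mapping.keys q"
    using q \<sigma> by (simp add: sym_laurent_iff perm_invariant_def in_keys_iff)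
  then have "perm_mon \<sigma> ?\<alpha> \<le> ?\<alpha>"
    by simp
  moreover have "?\<alpha> < perm_mon \<sigma> ?\<alpha>"
    unfolding less_poly_mapping.rep_eq less_fun_def
    using \<open>\<not> _ \<le> _\<close> permutes_bij[OF \<sigma>]
    by (intro exI[of _ i]) (auto simp: lookup_perm_mon \<sigma>_def inv_transpose_eq transpose_def)
  ultimately show False
    by simp
qed

definition exp_box :: "nat \<Rightarrow> int \<Rightarrow> (nat \<Rightarrow>\<^sub>0 int) set" where
  "exp_box m T = {\<beta>. nonneg_exps m \<beta> \<and> total_deg m \<beta> \<le> T}"

lemma finite_exp_box: "finite (exp_box m T)"
proof -
  let ?f = "\<lambda>\<beta>. map (Poly_Mapping.lookup \<beta>) [0..<m]"
  have "Poly_Mapping.lookup \<beta> i \<le> T" if "\<beta> \<in> exp_box m T" "i < m" for \<beta> i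
    using that member_le_sum[of i "{..<m}" "Poly_Mapping.lookup \<beta>"]
    by (auto simp: exp_box_def nonneg_exps_def total_deg_def)
  then have "?f ` exp_box m T \<subseteq> {xs. set xs \<subseteq> {0..T} \<and> length xs = m}"
    by (auto simp: exp_box_def nonneg_exps_def)
  then have "finite (?f ` exp_box m T)"
    by (rule finite_subset) (simp add: finite_lists_length_eq)
  moreover have "inj_on ?f (exp_box m T)"
  proof (rule inj_onI, rule poly_mapping_eqI)
    fix a b i assume "a \<in> exp_box m T" "b \<in> exp_box m T" "?f a = ?f b"
    then show "Poly_Mapping.lookup a i = Poly_Mapping.lookup b i"
      by (cases "i < m") (auto simp: exp_box_def nonneg_exps_def map_eq_conv lookup_eq_0_beyond_keys)
  qed
  ultimately show ?thesis
    by (rule finite_imageD)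
qed

text \<open>Homogeneity of \<open>esym_mon m \<alpha>\<close> keeps the exponents of the reduced polynomial inside
  the box, so that the reduction terminates.\<close>

lemma sym_poly_reduce_lead:
  assumes q: "q \<in> sym_laurent m" "q \<noteq> 0" "Poly_Mapping.keys q \<subseteq> exp_box m T"
  defines "\<alpha> \<equiv> Max (Poly_Mapping.keys q)"
  defines "q' \<equiv> q - of_int (Poly_Mapping.lookup q \<alpha>) * esym_mon m \<alpha>"
  shows "q' \<in> sym_laurent m" "Poly_Mapping.keys q' \<subseteq> exp_box m T" "\<forall>\<beta>\<in>Poly_Mapping.keys q'. \<beta> < \<alpha>"
proof -
  have \<alpha>: "\<alpha> \<in> Poly_Mapping.keys q" "\<alpha> \<in> exp_box m T"
    using q by (auto simp: \<alpha>_def intro: Max_in)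
  have lead: "lead_monic (esym_mon m \<alpha>) \<alpha>"
    using \<alpha> decreasing_Max_keys[OF q(1,2)]
    by (intro lead_monic_esym_mon) (auto simp: \<alpha>_def exp_box_def)
  obtain d where "homogeneous m d (esym_mon m \<alpha>)"
    using homogeneous_esym_mon by blast
  moreover have "\<alpha> \<in> Poly_Mapping.keys (esym_mon m \<alpha>)"
    using lead by (simp add: lead_monic_def in_keys_iff)
  ultimately have box: "Poly_Mapping.keys (esym_mon m \<alpha>) \<subseteq> exp_box m T"
    using \<alpha> by (auto simp: homogeneous_def exp_box_def)
  have keys: "Poly_Mapping.keys q' \<subseteq> Poly_Mapping.keys q \<union> Poly_Mapping.keys (esym_mon m \<alpha>)"
    by (auto simp: q'_def in_keys_iff lookup_minus lookup_of_int_mult)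
  show "q' \<in> sym_laurent m"
    unfolding q'_def using q by (intro sym_laurent_diff sym_laurent_mult sym_laurent_of_int esym_mon_in_sym_laurent)
  show "Poly_Mapping.keys q' \<subseteq> exp_box m T"
    using keys box q(3) by blast
  have "Poly_Mapping.lookup q' \<alpha> = 0"
    using lead by (simp add: q'_def lookup_minus lookup_of_int_mult lead_monic_def)
  then have "\<beta> \<noteq> \<alpha>" if "\<beta> \<in> Poly_Mapping.keys q'" for \<beta>
    using that by (auto simp: in_keys_iff)
  moreover have "\<beta> \<le> \<alpha>" if "\<beta> \<in> Poly_Mapping.keys q'" for \<beta>
    using that keys lead by (auto simp: lead_monic_def \<alpha>_def)
  ultimately show "\<forall>\<beta>\<in>Poly_Mapping.keys q'. \<beta> < \<alpha>"
    by (simp add: order.strict_iff_order)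
qed

lemma sym_poly_in_subring_gen_esym_box:
  assumes "q \<in> sym_laurent m" "Poly_Mapping.keys q \<subseteq> exp_box m T"
  shows "q \<in> subring_gen (esym m ` {..m})"
  using assms
proof (induction "card {\<beta>\<in>exp_box m T. \<beta> \<le> Max (Poly_Mapping.keys q)}" arbitrary: q rule: less_induct)
  case less
  show ?case
  proof (cases "q = 0")
    case True
    then show ?thesis by (simp add: subring_gen_zero)
  next
    case False
    let ?\<alpha> = "Max (Poly_Mapping.keys q)"
    let ?c = "Poly_Mapping.lookup q ?\<alpha>"
    define q' where "q' = q - of_int ?c * esym_mon m ?\<alpha>"
    note q' = sym_poly_reduce_lead[OF less.prems(1) False less.prems(2), folded q'_def]
    have "q' \<in> subring_gen (esym m ` {..m})"
    proof (cases "q' = 0")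
      case True
      then show ?thesis by (simp add: subring_gen_zero)
    next
      case False
      then have "Max (Poly_Mapping.keys q') < ?\<alpha>"
        using q'(3) by (auto intro: Max_in)
      moreover have "?\<alpha> \<in> exp_box m T"
        using \<open>q \<noteq> 0\<close> less.prems(2) by (auto intro: Max_in)
      ultimately have "{\<beta>\<in>exp_box m T. \<beta> \<le> Max (Poly_Mapping.keys q')} \<subset> {\<beta>\<in>exp_box m T. \<beta> \<le> ?\<alpha>}"
        by (auto dest: order.strict_trans2)
      then have "card {\<beta>\<in>exp_box m T. \<beta> \<le> Max (Poly_Mapping.keys q')} < card {\<beta>\<in>exp_box m T. \<beta> \<le> ?\<alpha>}"
        by (intro psubset_card_mono) (simp add: finite_exp_box)
      then show ?thesis
        using less.hyps q'(1,2) by blast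
    qed
    moreover have "q = q' + of_int ?c * esym_mon m ?\<alpha>"
      by (simp add: q'_def)
    ultimately show ?thesis
      by (metis subring_gen.add subring_gen.mult subring_gen_of_int esym_mon_in_subring_gen_esym)
  qed
qed

lemma sym_poly_in_subring_gen_esym:
  assumes "q \<in> sym_laurent m" "\<And>\<beta> i. \<beta> \<in> Poly_Mapping.keys q \<Longrightarrow> 0 \<le> Poly_Mapping.lookup \<beta> i"
  shows "q \<in> subring_gen (esym m ` {..m})"
proof (rule sym_poly_in_subring_gen_esym_box[OF assms(1)])
  show "Poly_Mapping.keys q \<subseteq> exp_box m (\<Sum>\<beta>\<in>Poly_Mapping.keys q. total_deg m \<beta>)"
  proof
    fix \<beta> assume \<beta>: "\<beta> \<in> Poly_Mapping.keys q"
    have nonneg: "nonneg_exps m \<gamma>" if "\<gamma> \<in> Poly_Mapping.keys q" for \<gamma>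
      using assms that by (auto simp: sym_laurent_iff laurent_ring_def nonneg_exps_def)
    then have "total_deg m \<beta> \<le> (\<Sum>\<beta>\<in>Poly_Mapping.keys q. total_deg m \<beta>)"
      using \<beta> by (intro member_le_sum) (auto simp: total_deg_def nonneg_exps_def intro: sum_nonneg)
    then show "\<beta> \<in> exp_box m (\<Sum>\<beta>\<in>Poly_Mapping.keys q. total_deg m \<beta>)"
      using nonneg[OF \<beta>] by (simp add: exp_box_def)
  qed
qed


lemma esym_top_power_clears_denominators:
  assumes "p \<in> laurent_ring m"
  obtains N where "\<And>\<beta> i. \<beta> \<in> Poly_Mapping.keys (esym m m ^ N * p) \<Longrightarrow> 0 \<le> Poly_Mapping.lookup \<beta> i"
proof
  let ?E = "{- Poly_Mapping.lookup \<beta> i |\<beta> i. \<beta> \<in> Poly_Mapping.keys p \<and> i < m}"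
  define N where "N = nat (Max (insert 0 ?E))"
  have "finite ?E"
    using finite_image_set2[of "\<lambda>\<beta>. \<beta> \<in> Poly_Mapping.keys p" "\<lambda>i. i < m"] by simp
  then have N: "- Poly_Mapping.lookup \<beta> i \<le> int N" if "\<beta> \<in> Poly_Mapping.keys p" "i < m" for \<beta> i
    using that Max_ge[of "insert 0 ?E" "- Poly_Mapping.lookup \<beta> i"] by (fastforce simp: N_def)
  have esym_power: "esym m m ^ N = mon (frag_cmul (int N) (ind {..<m}))"
    by (induction N) (simp_all add: esym_top mon_mult frag_cmul_distrib)
  fix \<beta> i assume "\<beta> \<in> Poly_Mapping.keys (esym m m ^ N * p)"
  then obtain \<gamma> where \<gamma>: "\<gamma> \<in> Poly_Mapping.keys p" "\<beta> = frag_cmul (int N) (ind {..<m}) + \<gamma>"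
    unfolding esym_power by (auto elim: keys_multE)
  have "Poly_Mapping.keys \<gamma> \<subseteq> {..<m}"
    using assms \<gamma>(1) by (simp add: laurent_ring_def)
  then have "Poly_Mapping.lookup \<gamma> i = 0" if "\<not> i < m"
    using that by (simp add: lookup_eq_0_beyond_keys)
  then show "0 \<le> Poly_Mapping.lookup \<beta> i"
    using N[OF \<gamma>(1), of i] by (cases "i < m") (auto simp: \<gamma>(2) lookup_add lookup_ind)
qed

lemma sym_laurent_in_subring_gen_H:
  assumes m: "m > 0" and p: "p \<in> sym_laurent m"
  shows "p \<in> subring_gen (range (H m))"
proof -
  obtain N where N: "\<And>\<beta> i. \<beta> \<in> Poly_Mapping.keys (esym m m ^ N * p) \<Longrightarrow> 0 \<le> Poly_Mapping.lookup \<beta> i"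
    using p esym_top_power_clears_denominators by (auto simp: sym_laurent_iff)
  have "esym m m ^ N * p \<in> subring_gen (esym m ` {..m})"
    using p N by (intro sym_poly_in_subring_gen_esym sym_laurent_mult sym_laurent_power esym_in_sym_laurent)
  also have "\<dots> \<subseteq> subring_gen (range (H m))"
    using esym_in_subring_gen_H[OF m] by (intro subring_gen_mono) auto
  finally have "xprod_inv m ^ N * (esym m m ^ N * p) \<in> subring_gen (range (H m))"
    by (rule subring_gen.mult[OF subring_gen_power[OF xprod_inv_in_subring_gen_H[OF m]]])
  moreover have "xprod_inv m ^ N * (esym m m ^ N * p) = (esym m m * xprod_inv m) ^ N * p"
    by (simp only: power_mult_distrib mult_ac)
  ultimately show ?thesis
    by (simp add: esym_top_mult_xprod_inv)
qed

theorem mainTheorem4: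
  fixes m :: nat
  assumes "m \<ge> 1"
  shows "subring_gen (range (H m)) = sym_laurent m"
proof
  have m: "m > 0" using assms by simp
  show "subring_gen (range (H m)) \<subseteq> sym_laurent m"
    using H_mult_vandermonde(1)[OF m] by (intro subring_gen_subset_sym_laurent) auto
  show "sym_laurent m \<subseteq> subring_gen (range (H m))"
    using sym_laurent_in_subring_gen_H[OF m] by blast
qed

end
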